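(* Let $f_1,\dots,f_m\in\mathbb{K}[x_1,\dots,x_n]$, with $\mathbb{K}\subset\mathbb{R}$ a field, satisfy the regularity hypothesis below, and let $\mathcal{M}\subset\mathbb{R}^n$ be a finite set such that $\mathcal{M}\cap\overline C\ne\emptyset$ for every connected component $C$ of the realization of each feasible sign condition over $f_1,\dots,f_m$. Then the set of all feasible sign conditions over $f_1,\dots,f_m$ equals $\bigcup_{\sigma\in\mathcal{L}(\mathcal{M})}P_\sigma$, where $\mathcal{L}(\mathcal{M})$ is the set of sign conditions satisfied by the elements of $\mathcal{M}$ and $P_\sigma\subset\{<,=,>\}^m$ is the set of elements obtained from $\sigma$ by replacing some (possibly none) of its ``$=$'' coordinates with ``$<$'' or ``$>$''.
   Context: Regularity hypothesis: for every $x\in\mathbb{C}^n$ and every $\{i_1,\dots,i_s\}\subset\{1,\dots,m\}$, if $f_{i_1}(x)=\dots=f_{i_s}(x)=0$ then $\nabla f_{i_1}(x),\dots,\nabla f_{i_s}(x)$ are linearly independent. A sign condition is $\sigma\in\{<,=,>\}^m$; its realization is $\{x\in\mathbb{R}^n:f_i(x)\sigma_i0,\ 1\le i\le m\}$; it is feasible if the realization is nonempty. A point $z$ satisfies $\sigma$ if $f_i(z)\sigma_i0$ for all $i$. *)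

theory Defs
  imports "HOL-Analysis.Analysis" "HOL-Library.Poly_Mapping"
begin

text \<open>Multivariate polynomials in the variables indexed by the finite type 'n
  (so n = CARD('n)), with real coefficients: finitely supported maps from
  exponent vectors to coefficients.\<close>
type_synonym 'n mpoly = "('n \<Rightarrow> nat) \<Rightarrow>\<^sub>0 real"

definition mpoly_eval :: "'n::finite mpoly \<Rightarrow> 'a::real_field ^ 'n \<Rightarrow> 'a" where
  "mpoly_eval p x = (\<Sum>\<alpha>\<in>Poly_Mapping.keys p. of_real (Poly_Mapping.lookup p \<alpha>) * (\<Prod>j\<in>UNIV. (x $ j) ^ \<alpha> j))"

definition mpoly_grad :: "'n::finite mpoly \<Rightarrow> 'a::real_field ^ 'n \<Rightarrow> 'a ^ 'n" where
  "mpoly_grad p x = (\<chi> i. \<Sum>\<alpha>\<in>Poly_Mapping.keys p. of_real (Poly_Mapping.lookup p \<alpha>) * of_nat (\<alpha> i) *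
      (\<Prod>j\<in>UNIV. (x $ j) ^ (if j = i then \<alpha> j - 1 else \<alpha> j)))"

definition lin_indep_family :: "('i \<Rightarrow> 'a::field ^ 'n) \<Rightarrow> 'i set \<Rightarrow> bool" where
  "lin_indep_family v S \<longleftrightarrow>
     (\<forall>c. (\<Sum>i\<in>S. c i *s v i) = 0 \<longrightarrow> (\<forall>i\<in>S. c i = 0))"

definition subfield_of_reals :: "real set \<Rightarrow> bool" where
  "subfield_of_reals K \<longleftrightarrow> 0 \<in> K \<and> 1 \<in> K \<and>
     (\<forall>a\<in>K. \<forall>b\<in>K. a + b \<in> K \<and> a * b \<in> K) \<and>
     (\<forall>a\<in>K. - a \<in> K) \<and> (\<forall>a\<in>K. a \<noteq> 0 \<longrightarrow> inverse a \<in> K)"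

definition regular :: "nat \<Rightarrow> (nat \<Rightarrow> 'n::finite mpoly) \<Rightarrow> bool" where
  "regular m f \<longleftrightarrow>
     (\<forall>x :: complex ^ 'n. \<forall>S \<subseteq> {1..m}.
        (\<forall>i\<in>S. mpoly_eval (f i) x = 0) \<longrightarrow> lin_indep_family (\<lambda>i. mpoly_grad (f i) x) S)"

datatype sign_rel = SLt | SEq | SGt

fun holds :: "sign_rel \<Rightarrow> real \<Rightarrow> bool" where
  "holds SLt a = (a < 0)"
| "holds SEq a = (a = 0)"
| "holds SGt a = (a > 0)"

definition sign_conds :: "nat \<Rightarrow> (nat \<Rightarrow> sign_rel) set" where
  "sign_conds m = {1..m} \<rightarrow>\<^sub>E (UNIV :: sign_rel set)"

definition satisfies :: "nat \<Rightarrow> (nat \<Rightarrow> 'n::finite mpoly) \<Rightarrow> (nat \<Rightarrow> sign_rel) \<Rightarrow> real ^ 'n \<Rightarrow> bool" where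
  "satisfies m f \<sigma> z \<longleftrightarrow> (\<forall>i\<in>{1..m}. holds (\<sigma> i) (mpoly_eval (f i) z))"

definition realization :: "nat \<Rightarrow> (nat \<Rightarrow> 'n::finite mpoly) \<Rightarrow> (nat \<Rightarrow> sign_rel) \<Rightarrow> (real ^ 'n) set" where
  "realization m f \<sigma> = {x. satisfies m f \<sigma> x}"

definition feasible :: "nat \<Rightarrow> (nat \<Rightarrow> 'n::finite mpoly) \<Rightarrow> (nat \<Rightarrow> sign_rel) \<Rightarrow> bool" where
  "feasible m f \<sigma> \<longleftrightarrow> realization m f \<sigma> \<noteq> {}"

definition L_of :: "nat \<Rightarrow> (nat \<Rightarrow> 'n::finite mpoly) \<Rightarrow> (real ^ 'n) set \<Rightarrow> (nat \<Rightarrow> sign_rel) set" where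
  "L_of m f M = {\<sigma> \<in> sign_conds m. \<exists>z\<in>M. satisfies m f \<sigma> z}"

definition P_of :: "nat \<Rightarrow> (nat \<Rightarrow> sign_rel) \<Rightarrow> (nat \<Rightarrow> sign_rel) set" where
  "P_of m \<sigma> = {\<tau> \<in> sign_conds m. \<forall>i\<in>{1..m}. \<sigma> i \<noteq> SEq \<longrightarrow> \<tau> i = \<sigma> i}"

end

theory Submission
  imports Defs
begin

text \<open>If \<open>\<sigma>\<close> is feasible, some \<open>z \<in> M\<close> lies in the closure of its realization; by continuity
  every \<open>f\<^sub>i\<close> not vanishing at \<open>z\<close> has there the sign prescribed by \<open>\<sigma>\<close>, so \<open>\<sigma>\<close> is obtained from
  the sign condition of \<open>z\<close> by resolving some of its equalities. Conversely, if \<open>z\<close> satisfies \<open>\<sigma>\<close>,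
  regularity makes the gradients at \<open>z\<close> of the \<open>f\<^sub>i\<close> vanishing there linearly independent.
  Completed by coordinates to a local diffeomorphism, these \<open>f\<^sub>i\<close> take every small tuple of values
  near \<open>z\<close>, while the strict conditions of \<open>\<sigma>\<close> persist; hence every element of \<open>P\<^sub>\<sigma>\<close> is feasible.\<close>

lemma has_derivative_monomial:
  fixes x :: "real ^ 'n::finite"
  shows "((\<lambda>x. \<Prod>j\<in>UNIV. (x $ j) ^ \<alpha> j) has_derivative
     (\<lambda>h. \<Sum>i\<in>UNIV. of_nat (\<alpha> i) * h $ i * (\<Prod>j\<in>UNIV. (x $ j) ^ (if j = i then \<alpha> j - 1 else \<alpha> j)))) (at x)"
proof -
  have factor: "((\<lambda>x. (x $ j) ^ \<alpha> j) has_derivative (\<lambda>h. of_nat (\<alpha> j) * h $ j * (x $ j) ^ (\<alpha> j - 1))) (at x)" for j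
    using has_derivative_power[OF bounded_linear_imp_has_derivative[OF bounded_linear_vec_nth[of j]], where n="\<alpha> j" and x=x]
    by simp
  have omit: "(\<Prod>j\<in>UNIV. (x $ j) ^ (if j = i then \<alpha> j - 1 else \<alpha> j))
      = (x $ i) ^ (\<alpha> i - 1) * (\<Prod>j\<in>UNIV - {i}. (x $ j) ^ \<alpha> j)" for i
    by (subst prod.remove[of UNIV i]) (auto intro!: prod.cong)
  show ?thesis
    using has_derivative_prod[of UNIV "\<lambda>j x. (x $ j) ^ \<alpha> j", OF factor] by (simp add: omit mult_ac)
qed

lemma has_derivative_mpoly_eval:
  fixes x :: "real ^ 'n::finite"
  shows "(mpoly_eval p has_derivative (\<lambda>h. mpoly_grad p x \<bullet> h)) (at x)"
proof -
  have "((\<lambda>x. \<Sum>\<alpha>\<in>Poly_Mapping.keys p. Poly_Mapping.lookup p \<alpha> * (\<Prod>j\<in>UNIV. (x $ j) ^ \<alpha> j)) has_derivative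
     (\<lambda>h. \<Sum>\<alpha>\<in>Poly_Mapping.keys p. Poly_Mapping.lookup p \<alpha> *
        (\<Sum>i\<in>UNIV. of_nat (\<alpha> i) * h $ i * (\<Prod>j\<in>UNIV. (x $ j) ^ (if j = i then \<alpha> j - 1 else \<alpha> j))))) (at x)"
    by (intro has_derivative_sum has_derivative_mult_right has_derivative_monomial)
  moreover have "(\<lambda>h. \<Sum>\<alpha>\<in>Poly_Mapping.keys p. Poly_Mapping.lookup p \<alpha> *
        (\<Sum>i\<in>UNIV. of_nat (\<alpha> i) * h $ i * (\<Prod>j\<in>UNIV. (x $ j) ^ (if j = i then \<alpha> j - 1 else \<alpha> j))))
      = (\<lambda>h. mpoly_grad p x \<bullet> h)"
    by (auto simp: mpoly_grad_def inner_vec_def sum_distrib_left sum_distrib_right mult_ac intro!: ext sum.swap)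
  ultimately show ?thesis by (simp add: mpoly_eval_def[abs_def])
qed

lemma continuous_on_mpoly_eval: "continuous_on A (mpoly_eval p :: real ^ 'n::finite \<Rightarrow> real)"
  unfolding mpoly_eval_def by (intro continuous_intros)

lemma mpoly_eval_of_real:
  "mpoly_eval p (\<chi> j. complex_of_real (z $ j)) = complex_of_real (mpoly_eval p z)"
  by (simp add: mpoly_eval_def)

lemma mpoly_grad_of_real:
  "mpoly_grad p (\<chi> j. complex_of_real (z $ j)) = (\<chi> i. complex_of_real (mpoly_grad p z $ i))"
  by (simp add: mpoly_grad_def)

text \<open>Regularity is imposed at complex points; a real linear relation among the real gradients
  is in particular a complex one.\<close>
lemma regular_imp_lin_indep_real_gradients:
  fixes f :: "nat \<Rightarrow> 'n::finite mpoly" and z :: "real ^ 'n"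
  assumes "regular m f" "S \<subseteq> {1..m}" "\<forall>i\<in>S. mpoly_eval (f i) z = 0"
  shows "lin_indep_family (\<lambda>i. mpoly_grad (f i) z) S"
  unfolding lin_indep_family_def
proof (intro allI impI)
  let ?zc = "\<chi> j. complex_of_real (z $ j)"
  fix c assume rel: "(\<Sum>i\<in>S. c i *s mpoly_grad (f i) z) = 0"
  have complex_rel: "(\<Sum>i\<in>S. complex_of_real (c i) *s mpoly_grad (f i) ?zc) = 0"
  proof (rule vec_eq_iff[THEN iffD2], rule allI)
    fix k
    have "complex_of_real ((\<Sum>i\<in>S. c i *s mpoly_grad (f i) z) $ k) = 0"
      using rel by simp
    then show "(\<Sum>i\<in>S. complex_of_real (c i) *s mpoly_grad (f i) ?zc) $ k = 0 $ k"
      by (simp add: mpoly_grad_of_real)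
  qed
  have "lin_indep_family (\<lambda>i. mpoly_grad (f i) ?zc) S"
    using assms unfolding regular_def by (auto simp: mpoly_eval_of_real)
  then show "\<forall>i\<in>S. c i = 0"
    using complex_rel unfolding lin_indep_family_def by (metis of_real_eq_0_iff)
qed

lemma lin_indep_family_real_iff:
  fixes g :: "'i \<Rightarrow> real ^ 'n"
  shows "lin_indep_family g S \<longleftrightarrow> (\<forall>c. (\<Sum>i\<in>S. c i *\<^sub>R g i) = 0 \<longrightarrow> (\<forall>i\<in>S. c i = 0))"
  by (simp add: lin_indep_family_def scalar_mult_eq_scaleR)

lemma lin_indep_family_inj_on:
  fixes g :: "'i \<Rightarrow> real ^ 'n"
  assumes "finite S" "lin_indep_family g S"
  shows "inj_on g S"
proof (rule inj_onI, rule ccontr)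
  fix i j assume ij: "i \<in> S" "j \<in> S" "g i = g j" "i \<noteq> j"
  define c where "c k = (if k = i then 1 else if k = j then -1 else (0::real))" for k
  have "(\<Sum>k\<in>S. c k *\<^sub>R g k) = (\<Sum>k\<in>S. (if k = i then g i else 0) - (if k = j then g j else 0))"
    by (rule sum.cong) (auto simp: c_def ij(4))
  also have "\<dots> = 0"
    using ij assms(1) by (simp add: sum_subtractf)
  finally have "c i = 0"
    using assms(2) ij(1) unfolding lin_indep_family_real_iff by blast
  then show False by (simp add: c_def)
qed

lemma lin_indep_family_card_le:
  fixes g :: "'i \<Rightarrow> real ^ 'n::finite"
  assumes "finite S" "lin_indep_family g S"
  shows "card S \<le> CARD('n)"
proof -
  have inj: "inj_on g S" using lin_indep_family_inj_on[OF assms] .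
  have "independent (g ` S)"
  proof (rule independent_if_scalars_zero)
    show "finite (g ` S)" using assms(1) by simp
    fix c x assume sum0: "(\<Sum>x\<in>g ` S. c x *\<^sub>R x) = 0" and "x \<in> g ` S"
    then obtain i where "i \<in> S" "x = g i" by blast
    moreover have "(\<Sum>i\<in>S. c (g i) *\<^sub>R g i) = 0"
      using sum0 by (simp add: sum.reindex[OF inj])
    ultimately show "c x = 0"
      using assms(2) by (auto simp: lin_indep_family_real_iff)
  qed
  then have "card (g ` S) \<le> DIM(real ^ 'n)" using independent_bound by blast
  then show ?thesis by (simp add: card_image[OF inj])
qed

lemma has_derivative_vec_lambda:
  fixes f :: "'a::real_normed_vector \<Rightarrow> 'n::finite \<Rightarrow> real"
  assumes "\<And>k. ((\<lambda>x. f x k) has_derivative f' k) F"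
  shows "((\<lambda>x. \<chi> k. f x k) has_derivative (\<lambda>h. \<chi> k. f' k h)) F"
proof -
  have expand: "(\<chi> k. a k) = (\<Sum>k\<in>UNIV. a k *\<^sub>R axis k (1::real))" for a :: "'n \<Rightarrow> real"
    by (simp add: vec_eq_iff axis_def if_distrib cong: if_cong)
  show ?thesis
    unfolding expand by (intro has_derivative_sum has_derivative_scaleR_left assms)
qed

definition coordinate_completion ::
    "'i set \<Rightarrow> ('i \<Rightarrow> 'n::finite) \<Rightarrow> ('i \<Rightarrow> real ^ 'n \<Rightarrow> real) \<Rightarrow> real ^ 'n \<Rightarrow> real ^ 'n" where
  "coordinate_completion S \<phi> h t = (\<chi> k. if k \<in> \<phi> ` S then h (inv_into S \<phi> k) t else t $ k)"

lemma coordinate_completion_nth: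
  "inj_on \<phi> S \<Longrightarrow> i \<in> S \<Longrightarrow> coordinate_completion S \<phi> h t $ \<phi> i = h i t"
  by (simp add: coordinate_completion_def)

lemma coordinate_completion_nth_notin:
  "k \<notin> \<phi> ` S \<Longrightarrow> coordinate_completion S \<phi> h t $ k = t $ k"
  by (simp add: coordinate_completion_def)

lemma has_derivative_coordinate_completion:
  assumes "\<And>i. i \<in> S \<Longrightarrow> (h i has_derivative h' i) F"
  shows "(coordinate_completion S \<phi> h has_derivative coordinate_completion S \<phi> h') F"
proof -
  have "((\<lambda>t. t $ k) has_derivative (\<lambda>t. t $ k)) F" for k
    by (rule bounded_linear_imp_has_derivative[OF bounded_linear_vec_nth])
  then have "((\<lambda>t. if k \<in> \<phi> ` S then h (inv_into S \<phi> k) t else t $ k) has_derivative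
      (\<lambda>u. if k \<in> \<phi> ` S then h' (inv_into S \<phi> k) u else u $ k)) F" for k
    by (cases "k \<in> \<phi> ` S") (simp_all add: inv_into_into assms)
  then show ?thesis
    unfolding coordinate_completion_def[abs_def] by (rule has_derivative_vec_lambda)
qed

lemma continuous_on_coordinate_completion:
  assumes "\<And>i. i \<in> S \<Longrightarrow> continuous_on UNIV (h i)"
  shows "continuous_on UNIV (coordinate_completion S \<phi> h)"
proof -
  have "continuous_on UNIV (\<lambda>t. if k \<in> \<phi> ` S then h (inv_into S \<phi> k) t else t $ k)" for k
    by (cases "k \<in> \<phi> ` S") (auto simp: inv_into_into assms intro: continuous_on_component continuous_on_id)
  then show ?thesis
    unfolding coordinate_completion_def[abs_def] by (rule continuous_on_vec_lambda)
qed

lemma coordinate_completion_gradients_eq_0D: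
  fixes g :: "'i \<Rightarrow> real ^ 'n::finite"
  assumes indep: "lin_indep_family g S" and \<phi>: "inj_on \<phi> S"
    and eq0: "coordinate_completion S \<phi> (\<lambda>i u. g i \<bullet> (\<Sum>j\<in>S. u $ \<phi> j *\<^sub>R g j)) u = 0"
  shows "u = 0"
proof -
  let ?L = "\<Sum>j\<in>S. u $ \<phi> j *\<^sub>R g j"
  have off: "u $ k = 0" if "k \<notin> \<phi> ` S" for k
    using arg_cong[OF eq0, of "\<lambda>v. v $ k"] that by (simp add: coordinate_completion_nth_notin)
  have "g i \<bullet> ?L = 0" if "i \<in> S" for i
    using arg_cong[OF eq0, of "\<lambda>v. v $ \<phi> i"] that \<phi> by (simp add: coordinate_completion_nth)
  then have "?L \<bullet> ?L = 0"
    by (simp add: inner_sum_left)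
  then have "\<forall>j\<in>S. u $ \<phi> j = 0"
    using indep unfolding lin_indep_family_real_iff by auto
  with off show "u = 0"
    by (metis imageE vec_eq_iff zero_index)
qed

text \<open>Along \<open>z + L t\<close> the \<open>h\<^sub>i\<close>, completed by the coordinates outside \<open>\<phi> ` S\<close>, have an injective
  and hence invertible derivative at \<open>0\<close>, so Sussmann's open mapping theorem applies.\<close>
lemma coordinate_completion_interior_image:
  fixes h :: "'i \<Rightarrow> real ^ 'n::finite \<Rightarrow> real" and g :: "'i \<Rightarrow> real ^ 'n"
  assumes indep: "lin_indep_family g S" and \<phi>: "inj_on \<phi> S"
    and cont: "\<And>i. i \<in> S \<Longrightarrow> continuous_on UNIV (h i)"
    and deriv: "\<And>i. i \<in> S \<Longrightarrow> (h i has_derivative (\<lambda>v. g i \<bullet> v)) (at z)"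
    and L_def: "L = (\<lambda>t. \<Sum>j\<in>S. t $ \<phi> j *\<^sub>R g j)"
    and "open T" "0 \<in> T"
  shows "coordinate_completion S \<phi> (\<lambda>i t. h i (z + L t)) 0
    \<in> interior (coordinate_completion S \<phi> (\<lambda>i t. h i (z + L t)) ` T)"
proof -
  let ?F = "coordinate_completion S \<phi> (\<lambda>i t. h i (z + L t))"
  let ?D = "coordinate_completion S \<phi> (\<lambda>i u. g i \<bullet> L u)"
  have dL: "((\<lambda>t. z + L t) has_derivative L) (at 0)"
    unfolding L_def
    by (intro derivative_eq_intros) (auto intro: bounded_linear_imp_has_derivative bounded_linear_vec_nth)
  have "L 0 = 0" by (simp add: L_def)
  then have "((\<lambda>t. h i (z + L t)) has_derivative (\<lambda>u. g i \<bullet> L u)) (at 0)" if "i \<in> S" for i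
    using has_derivative_compose[OF dL, of "h i" "\<lambda>v. g i \<bullet> v"] deriv[OF that] by simp
  then have dF: "(?F has_derivative ?D) (at 0)"
    by (rule has_derivative_coordinate_completion)
  have "continuous_on UNIV (\<lambda>t. z + L t)"
    unfolding L_def by (intro continuous_intros)
  then have contF: "continuous_on UNIV ?F"
    using continuous_on_compose2[OF cont] by (intro continuous_on_coordinate_completion) blast
  have linD: "linear ?D" using has_derivative_linear[OF dF] .
  have "inj ?D"
    using linear_injective_0[OF linD] coordinate_completion_gradients_eq_0D[OF indep \<phi>]
    unfolding L_def by blast
  then obtain D' where D': "linear D'" "?D \<circ> D' = id"
    using linear_surjective_right_inverse[OF linD] linear_injective_imp_surjective[OF linD] by blast
  show ?thesis
    using assms(6,7)
    by (intro sussmann_open_mapping[OF open_UNIV contF _ dF _ D'(2)])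
       (auto simp: linear_conv_bounded_linear[symmetric] D'(1) interior_open)
qed

lemma independent_gradients_realize_small_values:
  fixes h :: "'i \<Rightarrow> real ^ 'n::finite \<Rightarrow> real" and g :: "'i \<Rightarrow> real ^ 'n"
  assumes "finite S" and indep: "lin_indep_family g S"
    and cont: "\<And>i. i \<in> S \<Longrightarrow> continuous_on UNIV (h i)"
    and deriv: "\<And>i. i \<in> S \<Longrightarrow> (h i has_derivative (\<lambda>v. g i \<bullet> v)) (at z)"
    and "open U" "z \<in> U"
  obtains e where "e > 0" "\<And>v. \<forall>i\<in>S. \<bar>v i\<bar> < e \<Longrightarrow> \<exists>x\<in>U. \<forall>i\<in>S. h i x = h i z + v i"
proof -
  obtain \<phi> :: "'i \<Rightarrow> 'n" where \<phi>: "inj_on \<phi> S"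
    using card_le_inj[OF assms(1) finite_class.finite_UNIV lin_indep_family_card_le[OF assms(1) indep]] by blast
  define L where "L = (\<lambda>t. \<Sum>j\<in>S. t $ \<phi> j *\<^sub>R g j)"
  define F where "F = coordinate_completion S \<phi> (\<lambda>i t. h i (z + L t))"
  define T where "T = (\<lambda>t. z + L t) -` U"
  have "open T"
    unfolding T_def L_def using \<open>open U\<close> by (intro open_vimage continuous_intros)
  moreover have "0 \<in> T" using \<open>z \<in> U\<close> by (simp add: T_def L_def)
  ultimately have "F 0 \<in> interior (F ` T)"
    using coordinate_completion_interior_image[OF indep \<phi> cont deriv L_def] by (simp add: F_def)
  then obtain e where e: "e > 0" "ball (F 0) e \<subseteq> F ` T"
    by (auto simp: mem_interior)
  show thesis
  proof
    show "e / (CARD('n) + 1) > 0" using e(1) by simp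
    fix v assume v: "\<forall>i\<in>S. \<bar>v i\<bar> < e / (CARD('n) + 1)"
    define w where "w = coordinate_completion S \<phi> (\<lambda>i t. v i) 0"
    have "norm w \<le> (\<Sum>k\<in>UNIV. \<bar>w $ k\<bar>)" by (rule norm_le_l1_cart)
    also have "\<dots> \<le> (\<Sum>k::'n\<in>UNIV. e / (CARD('n) + 1))"
      by (rule sum_mono) (use v e(1) in \<open>auto simp: w_def coordinate_completion_def inv_into_into less_imp_le\<close>)
    also have "\<dots> < e" using e(1) by (simp add: field_simps)
    finally have "F 0 + w \<in> ball (F 0) e" by (simp add: dist_norm)
    then obtain t where t: "t \<in> T" "F t = F 0 + w" using e(2) by (metis imageE subsetD)
    have "h i (z + L t) = h i z + v i" if "i \<in> S" for i
      using arg_cong[OF t(2), of "\<lambda>x. x $ \<phi> i"] that \<phi>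
      by (simp add: F_def w_def L_def coordinate_completion_nth)
    then show "\<exists>x\<in>U. \<forall>i\<in>S. h i x = h i z + v i"
      using t(1) by (auto simp: T_def)
  qed
qed

definition sign_rel_of :: "real \<Rightarrow> sign_rel" where
  "sign_rel_of a = (if a < 0 then SLt else if a = 0 then SEq else SGt)"

lemma holds_iff_sign_rel_of: "holds r a \<longleftrightarrow> r = sign_rel_of a"
  by (cases r) (auto simp: sign_rel_of_def)

definition sign_value :: "sign_rel \<Rightarrow> real" where
  "sign_value r = (case r of SLt \<Rightarrow> -1 | SEq \<Rightarrow> 0 | SGt \<Rightarrow> 1)"

lemma holds_scaled_sign_value: "c > 0 \<Longrightarrow> holds r (c * sign_value r)"
  by (cases r) (auto simp: sign_value_def)

lemma abs_sign_value_le: "\<bar>sign_value r\<bar> \<le> 1"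
  by (cases r) (auto simp: sign_value_def)

lemma closure_holds_subset:
  fixes g :: "'a::topological_space \<Rightarrow> real"
  assumes "continuous_on UNIV g"
  shows "closure {x. holds r (g x)} \<subseteq> {x. holds r (g x) \<or> g x = 0}"
proof (rule closure_minimal)
  have "closed {x. g x \<le> 0}" "closed {x. g x = 0}" "closed {x. 0 \<le> g x}"
    using closed_Collect_le[OF assms continuous_on_const] closed_Collect_eq[OF assms continuous_on_const]
      closed_Collect_le[OF continuous_on_const assms] by simp_all
  moreover have "{x. holds r (g x) \<or> g x = 0} =
      (case r of SLt \<Rightarrow> {x. g x \<le> 0} | SEq \<Rightarrow> {x. g x = 0} | SGt \<Rightarrow> {x. 0 \<le> g x})"
    by (cases r) auto
  ultimately show "closed {x. holds r (g x) \<or> g x = 0}"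
    by (simp split: sign_rel.split)
qed auto

lemma open_holds_strict:
  fixes g :: "'a::topological_space \<Rightarrow> real"
  assumes "continuous_on UNIV g" "r \<noteq> SEq"
  shows "open {x. holds r (g x)}"
  using assms open_Collect_less[OF assms(1) continuous_on_const] open_Collect_less[OF continuous_on_const assms(1)]
  by (cases r) simp_all

definition sign_condition_at :: "nat \<Rightarrow> (nat \<Rightarrow> 'n::finite mpoly) \<Rightarrow> real ^ 'n \<Rightarrow> nat \<Rightarrow> sign_rel" where
  "sign_condition_at m f z = (\<lambda>i\<in>{1..m}. sign_rel_of (mpoly_eval (f i) z))"

lemma sign_condition_at_in_L_of:
  assumes "z \<in> M"
  shows "sign_condition_at m f z \<in> L_of m f M"
  using assms
  by (auto simp: L_of_def sign_conds_def sign_condition_at_def satisfies_def holds_iff_sign_rel_of)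

lemma closure_realization_in_P_of:
  assumes "\<sigma> \<in> sign_conds m" "z \<in> closure (realization m f \<sigma>)"
  shows "\<sigma> \<in> P_of m (sign_condition_at m f z)"
  unfolding P_of_def
proof (intro CollectI conjI ballI impI)
  fix i assume i: "i \<in> {1..m}" and "sign_condition_at m f z i \<noteq> SEq"
  then have nonzero: "mpoly_eval (f i) z \<noteq> 0"
    by (auto simp: sign_condition_at_def sign_rel_of_def)
  have "realization m f \<sigma> \<subseteq> {x. holds (\<sigma> i) (mpoly_eval (f i) x)}"
    using i by (auto simp: realization_def satisfies_def)
  then have "z \<in> {x. holds (\<sigma> i) (mpoly_eval (f i) x) \<or> mpoly_eval (f i) x = 0}"
    using assms(2) closure_mono closure_holds_subset[OF continuous_on_mpoly_eval] by blast
  then show "\<sigma> i = sign_condition_at m f z i"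
    using nonzero i by (simp add: sign_condition_at_def holds_iff_sign_rel_of)
qed (fact assms(1))

lemma feasible_imp_in_P_of_L_of:
  assumes "\<sigma> \<in> sign_conds m" "feasible m f \<sigma>"
    and "\<forall>C\<in>components (realization m f \<sigma>). M \<inter> closure C \<noteq> {}"
  shows "\<exists>\<tau>\<in>L_of m f M. \<sigma> \<in> P_of m \<tau>"
proof -
  let ?R = "realization m f \<sigma>"
  obtain x where "x \<in> ?R" using assms(2) by (auto simp: feasible_def)
  then have "connected_component_set ?R x \<in> components ?R" by (simp add: components_def)
  then obtain z where z: "z \<in> M" "z \<in> closure (connected_component_set ?R x)"
    using assms(3) by blast
  then have "z \<in> closure ?R"
    using closure_mono[OF connected_component_subset] by blast
  then show ?thesis
    using sign_condition_at_in_L_of[OF z(1)] closure_realization_in_P_of[OF assms(1)] by blast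
qed

lemma P_of_satisfied_feasible:
  assumes "regular m f" "satisfies m f \<sigma> z" "\<tau> \<in> P_of m \<sigma>"
  shows "feasible m f \<tau>"
proof -
  define S where "S = {i\<in>{1..m}. \<sigma> i = SEq}"
  define U where "U = (\<Inter>j\<in>{1..m} - S. {x. holds (\<sigma> j) (mpoly_eval (f j) x)})"
  have S: "S \<subseteq> {1..m}" "finite S" by (auto simp: S_def)
  have zero: "\<forall>i\<in>S. mpoly_eval (f i) z = 0"
    using assms(2) by (force simp: S_def satisfies_def)
  have "open U"
    unfolding U_def by (intro open_INT finite_Diff finite_atLeastAtMost ballI open_holds_strict
        continuous_on_mpoly_eval) (auto simp: S_def)
  moreover have "z \<in> U"
    using assms(2) by (auto simp: U_def satisfies_def)
  ultimately obtain e where e: "e > 0"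
    "\<And>v. \<forall>i\<in>S. \<bar>v i\<bar> < e \<Longrightarrow> \<exists>x\<in>U. \<forall>i\<in>S. mpoly_eval (f i) x = mpoly_eval (f i) z + v i"
    using independent_gradients_realize_small_values[OF S(2)
        regular_imp_lin_indep_real_gradients[OF assms(1) S(1) zero]
        continuous_on_mpoly_eval has_derivative_mpoly_eval]
    by metis
  have "\<bar>e / 2 * sign_value (\<tau> i)\<bar> < e" for i
    using e(1) abs_sign_value_le[of "\<tau> i"] by (simp add: abs_mult)
  then obtain x where x: "x \<in> U" "\<forall>i\<in>S. mpoly_eval (f i) x = e / 2 * sign_value (\<tau> i)"
    using e(2)[of "\<lambda>i. e / 2 * sign_value (\<tau> i)"] zero by auto
  have "holds (\<tau> i) (mpoly_eval (f i) x)" if i: "i \<in> {1..m}" for i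
  proof (cases "i \<in> S")
    case True
    with x(2) have "mpoly_eval (f i) x = e / 2 * sign_value (\<tau> i)" by blast
    then show ?thesis using holds_scaled_sign_value[of "e / 2"] e(1) by (metis half_gt_zero)
  next
    case False
    then have "\<tau> i = \<sigma> i" using assms(3) i by (simp add: P_of_def S_def)
    then show ?thesis using x(1) i False by (simp add: U_def)
  qed
  then have "x \<in> realization m f \<tau>" by (simp add: realization_def satisfies_def)
  then show ?thesis by (auto simp: feasible_def)
qed

text \<open>The coefficient field \<open>K\<close> and the finiteness of \<open>M\<close> play no role in the argument.\<close>
theorem mainTheorem12:
  fixes K :: "real set" and m :: nat and f :: "nat \<Rightarrow> 'n::finite mpoly"
    and M :: "(real ^ 'n) set"
  assumes "subfield_of_reals K"
    and "\<forall>i\<in>{1..m}. \<forall>\<alpha>. Poly_Mapping.lookup (f i) \<alpha> \<in> K"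
    and "regular m f"
    and "finite M"
    and "\<forall>\<sigma>\<in>sign_conds m. feasible m f \<sigma> \<longrightarrow>
           (\<forall>C\<in>components (realization m f \<sigma>). M \<inter> closure C \<noteq> {})"
  shows "{\<sigma>\<in>sign_conds m. feasible m f \<sigma>} = (\<Union>\<sigma>\<in>L_of m f M. P_of m \<sigma>)"
proof
  show "{\<sigma>\<in>sign_conds m. feasible m f \<sigma>} \<subseteq> (\<Union>\<sigma>\<in>L_of m f M. P_of m \<sigma>)"
    using feasible_imp_in_P_of_L_of assms(5) by blast
  show "(\<Union>\<sigma>\<in>L_of m f M. P_of m \<sigma>) \<subseteq> {\<sigma>\<in>sign_conds m. feasible m f \<sigma>}"
    using P_of_satisfied_feasible[OF assms(3)] by (auto simp: L_of_def P_of_def)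
qed

end
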